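(* Let $G'$ be a cubic graph, and let $G$ be a cubic graph obtained from $G'$ by replacing one edge of $G'$ with a string of diamonds. Then $r_3(G)=r_3(G')$.
   Context: Graphs are finite, without loops, possibly with multiple edges; cubic means every vertex has degree $3$. For a cubic graph $G$, $\nu_3(G)$ is the maximum number of edges of a $3$-edge-colorable subgraph, and the resistance is $r_3(G)=|E(G)|-\nu_3(G)$. A diamond is a graph isomorphic to $K_4$ minus an edge; it has two vertices of degree $2$. Replacing an edge $a=uv$ of $G'$ with a string of $k\geq 1$ diamonds means: delete $a$, add $k$ vertex-disjoint new diamonds $D_1,\dots,D_k$, and add edges joining $u$ to a degree-$2$ vertex of $D_1$, the other degree-$2$ vertex of $D_i$ to a degree-$2$ vertex of $D_{i+1}$ for $1\le i<k$, and the other degree-$2$ vertex of $D_k$ to $v$ (so $6k+1$ new edges replace $a$ and the result is cubic). *)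

theory Defs
  imports Main
begin

definition multigraph :: "'v set \<Rightarrow> 'e set \<Rightarrow> ('e \<Rightarrow> 'v set) \<Rightarrow> bool" where
  "multigraph V E ends \<longleftrightarrow> finite V \<and> finite E \<and>
     (\<forall>e\<in>E. ends e \<subseteq> V \<and> card (ends e) = 2)"

definition degree :: "'e set \<Rightarrow> ('e \<Rightarrow> 'v set) \<Rightarrow> 'v \<Rightarrow> nat" where
  "degree E ends x = card {e\<in>E. x \<in> ends e}"

definition cubic :: "'v set \<Rightarrow> 'e set \<Rightarrow> ('e \<Rightarrow> 'v set) \<Rightarrow> bool" where
  "cubic V E ends \<longleftrightarrow> multigraph V E ends \<and> (\<forall>x\<in>V. degree E ends x = 3)"

definition colorable3 :: "('e \<Rightarrow> 'v set) \<Rightarrow> 'e set \<Rightarrow> bool" where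
  "colorable3 ends F \<longleftrightarrow> (\<exists>col :: 'e \<Rightarrow> nat. (\<forall>e\<in>F. col e < 3) \<and>
     (\<forall>e\<in>F. \<forall>f\<in>F. e \<noteq> f \<and> ends e \<inter> ends f \<noteq> {} \<longrightarrow> col e \<noteq> col f))"

definition nu3 :: "'v set \<Rightarrow> 'e set \<Rightarrow> ('e \<Rightarrow> 'v set) \<Rightarrow> nat" where
  "nu3 V E ends = Max {card F | F. F \<subseteq> E \<and> colorable3 ends F}"

definition r3 :: "'v set \<Rightarrow> 'e set \<Rightarrow> ('e \<Rightarrow> 'v set) \<Rightarrow> nat" where
  "r3 V E ends = card E - nu3 V E ends"

text \<open>Replacing the edge a = uv by a string of k diamonds.  Diamond i (i < k) has vertices
  dv i 0, dv i 1, dv i 2, dv i 3, edges 01,02,12,13,23 (the missing edge is 03, so dv i 0 and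
  dv i 3 have degree 2 inside the diamond).\<close>

definition dv :: "nat \<Rightarrow> nat \<Rightarrow> 'v + nat" where
  "dv i j = Inr (4*i + j)"

definition str_V :: "'v set \<Rightarrow> nat \<Rightarrow> ('v + nat) set" where
  "str_V V k = Inl ` V \<union> Inr ` {..<4*k}"

definition str_E :: "'e set \<Rightarrow> 'e \<Rightarrow> nat \<Rightarrow> ('e + nat) set" where
  "str_E E a k = Inl ` (E - {a}) \<union> Inr ` {..6*k}"

definition str_ends :: "('e \<Rightarrow> 'v set) \<Rightarrow> 'v \<Rightarrow> 'v \<Rightarrow> nat \<Rightarrow> ('e + nat) \<Rightarrow> ('v + nat) set" where
  "str_ends ends u v k x = (case x of
      Inl e \<Rightarrow> Inl ` ends e
    | Inr n \<Rightarrow>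
        (let i = n div 6; j = n mod 6 in
         if n = 6*k then {Inl u, dv 0 0}
         else if j = 0 then {dv i 0, dv i 1}
         else if j = 1 then {dv i 0, dv i 2}
         else if j = 2 then {dv i 1, dv i 2}
         else if j = 3 then {dv i 1, dv i 3}
         else if j = 4 then {dv i 2, dv i 3}
         else if i + 1 < k then {dv i 3, dv (i+1) 0}
         else {dv i 3, Inl v}))"

end

theory Submission
  imports Defs
begin

text \<open>A diamond string has a 3-edge-colouring in which both attaching edges get the same colour,
  and every 3-edge-colouring of it has this property: in a diamond the middle edge is adjacent to
  the two edges at either degree-2 vertex, so it carries the colour of both pendant edges.
  Hence a colourable subgraph of G' extends to one of G with exactly 6k more edges (through the
  string if it contained uv, and otherwise by dropping the edge at u with a colour missing at v),
  and conversely a colourable subgraph of G either misses a new edge or, containing all of them,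
  contracts to a colourable subgraph of G' containing uv. So nu3 and the number of edges both
  grow by 6k.\<close>

definition is_3_edge_colouring :: "('e \<Rightarrow> 'v set) \<Rightarrow> 'e set \<Rightarrow> ('e \<Rightarrow> nat) \<Rightarrow> bool" where
  "is_3_edge_colouring ends F col \<longleftrightarrow> (\<forall>e\<in>F. col e < 3) \<and>
     (\<forall>e\<in>F. \<forall>f\<in>F. e \<noteq> f \<and> ends e \<inter> ends f \<noteq> {} \<longrightarrow> col e \<noteq> col f)"

lemma colorable3_iff: "colorable3 ends F \<longleftrightarrow> (\<exists>col. is_3_edge_colouring ends F col)"
  unfolding colorable3_def is_3_edge_colouring_def ..

lemma is_3_edge_colouringD:
  assumes "is_3_edge_colouring ends F col"
  shows is_3_edge_colouring_lt3: "e \<in> F \<Longrightarrow> col e < 3"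
    and is_3_edge_colouring_adjacent:
      "e \<in> F \<Longrightarrow> f \<in> F \<Longrightarrow> e \<noteq> f \<Longrightarrow> w \<in> ends e \<Longrightarrow> w \<in> ends f \<Longrightarrow> col e \<noteq> col f"
  using assms unfolding is_3_edge_colouring_def by blast+

lemma is_3_edge_colouring_subset:
  "is_3_edge_colouring ends F col \<Longrightarrow> G \<subseteq> F \<Longrightarrow> is_3_edge_colouring ends G col"
  unfolding is_3_edge_colouring_def by blast

lemma colorable3_empty: "colorable3 ends {}"
  by (simp add: colorable3_def)

lemma finite_colorable3_sizes: "finite E \<Longrightarrow> finite {card F | F. F \<subseteq> E \<and> colorable3 ends F}"
proof -
  assume "finite E"
  moreover have "{card F | F. F \<subseteq> E \<and> colorable3 ends F} \<subseteq> card ` Pow E" by blast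
  ultimately show ?thesis using finite_subset by blast
qed

lemma card_le_nu3: "finite E \<Longrightarrow> F \<subseteq> E \<Longrightarrow> colorable3 ends F \<Longrightarrow> card F \<le> nu3 V E ends"
  unfolding nu3_def by (rule Max_ge) (auto intro: finite_colorable3_sizes)

lemma nu3_le:
  "finite E \<Longrightarrow> (\<And>F. F \<subseteq> E \<Longrightarrow> colorable3 ends F \<Longrightarrow> card F \<le> b) \<Longrightarrow> nu3 V E ends \<le> b"
  unfolding nu3_def using colorable3_empty[of ends]
  by (subst Max_le_iff) (auto intro: finite_colorable3_sizes)

lemma nu3_attained:
  assumes "finite E"
  obtains F where "F \<subseteq> E" "colorable3 ends F" "card F = nu3 V E ends"
proof -
  have "nu3 V E ends \<in> {card F | F. F \<subseteq> E \<and> colorable3 ends F}"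
    unfolding nu3_def using colorable3_empty[of ends]
    by (intro Max_in finite_colorable3_sizes assms) auto
  then show ?thesis using that by auto
qed

lemma lt3_eq_if_avoid_two:
  fixes x y a b :: nat
  assumes "x < 3" "y < 3" "a < 3" "b < 3" "a \<noteq> b" "x \<noteq> a" "x \<noteq> b" "y \<noteq> a" "y \<noteq> b"
  shows "x = y"
  using assms by arith

lemma mod3_add_left_inj:
  fixes a b c :: nat
  shows "a < 3 \<Longrightarrow> b < 3 \<Longrightarrow> (c + a) mod 3 = (c + b) mod 3 \<Longrightarrow> a = b"
  by presburger

lemma colour_not_in_image:
  fixes col :: "'a \<Rightarrow> nat"
  assumes "finite S" "card S \<le> 2"
  obtains d where "d < 3" "d \<notin> col ` S"
proof -
  have "card (col ` S) < card {..<3::nat}"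
    using card_image_le[OF assms(1), of col] assms(2) by simp
  then have "\<not> {..<3} \<subseteq> col ` S"
    using card_mono[of "col ` S" "{..<3}"] assms(1) by auto
  then show ?thesis using that by auto
qed

lemma card_Inl_Inr: "finite A \<Longrightarrow> finite B \<Longrightarrow> card (Inl ` A \<union> Inr ` B) = card A + card B"
  using card_Plus[of A B] by (simp add: Plus_def)

lemma dv_eq_iff: "r < 4 \<Longrightarrow> r' < 4 \<Longrightarrow> dv i r = dv i' r' \<longleftrightarrow> i = i' \<and> r = r'"
  unfolding dv_def sum.inject by presburger

lemma dv_neq_Inl [simp]: "dv i r \<noteq> Inl w" "Inl w \<noteq> dv i r"
  by (simp_all add: dv_def)

lemma str_ends_Inl [simp]: "str_ends ends u v k (Inl e) = Inl ` ends e"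
  by (simp add: str_ends_def)

lemma str_ends_attach: "str_ends ends u v k (Inr (6*k)) = {Inl u, dv 0 0}"
  by (simp add: str_ends_def)

lemma str_ends_diamond:
  assumes "i < k" "j < 6"
  shows "str_ends ends u v k (Inr (6*i + j)) =
    [{dv i 0, dv i 1}, {dv i 0, dv i 2}, {dv i 1, dv i 2}, {dv i 1, dv i 3}, {dv i 2, dv i 3},
     if i + 1 < k then {dv i 3, dv (i+1) 0} else {dv i 3, Inl v}] ! j"
proof -
  have d: "(6*i + j) div 6 = i" "(6*i + j) mod 6 = j" "(6*i + j = 6*k) = False"
    using assms by auto
  have "str_ends ends u v k (Inr (6*i + j)) =
    (if j = 0 then {dv i 0, dv i 1} else if j = 1 then {dv i 0, dv i 2}
     else if j = 2 then {dv i 1, dv i 2} else if j = 3 then {dv i 1, dv i 3}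
     else if j = 4 then {dv i 2, dv i 3}
     else if i + 1 < k then {dv i 3, dv (i+1) 0} else {dv i 3, Inl v})"
    unfolding str_ends_def Let_def sum.case d if_False by (rule refl)
  moreover have "j \<in> {0,1,2,3,4,5}" using assms(2) by auto
  ultimately show ?thesis by auto
qed

lemma new_edge_cases:
  fixes n :: nat
  assumes "n \<le> 6*k"
  obtains (attach) "n = 6*k" | (diamond) i j where "i < k" "j < 6" "n = 6*i + j"
proof (cases "n = 6*k")
  case False
  then have "n div 6 < k" "n mod 6 < 6" "n = 6*(n div 6) + n mod 6" using assms by auto
  then show ?thesis by (rule that(2))
qed (rule that(1))

lemma old_vertex_on_new_edge:
  assumes "n \<le> 6*k" "Inl w \<in> str_ends ends u v k (Inr n)"
  shows "(n = 6*k \<and> w = u) \<or> (n = 6*(k-1) + 5 \<and> w = v)"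
  using assms(1)
proof (cases rule: new_edge_cases)
  case attach
  then show ?thesis using assms(2) by (simp add: str_ends_attach)
next
  case (diamond i j)
  have "j \<in> {0,1,2,3,4,5}" using \<open>j < 6\<close> by auto
  then show ?thesis using assms(2) diamond str_ends_diamond[OF diamond(1,2), of ends u v]
    by (auto split: if_splits)
qed

lemma card_str_E:
  assumes "finite E" "a \<in> E"
  shows "card (str_E E a k) = card E + 6*k"
proof -
  have "card (str_E E a k) = card (E - {a}) + card {..6*k}"
    unfolding str_E_def using assms(1) by (simp add: card_Inl_Inr)
  moreover have "card E > 0" using assms card_gt_0_iff by blast
  ultimately show ?thesis using assms by simp
qed

definition string_colour :: "nat \<Rightarrow> nat \<Rightarrow> nat" where
  "string_colour k n = (if n = 6*k then 0 else [1, 2, 0, 2, 1, 0] ! (n mod 6))"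

lemma string_colour_lt3: "string_colour k n < 3"
proof -
  have "n mod 6 \<in> {0,1,2,3,4,5}" by auto
  then show ?thesis by (auto simp: string_colour_def)
qed

lemma string_colour_diamond:
  "i < k \<Longrightarrow> j < 6 \<Longrightarrow> string_colour k (6*i + j) = [1, 2, 0, 2, 1, 0] ! j"
  by (simp add: string_colour_def)

lemma string_colour_attach: "string_colour k (6*k) = 0"
  by (simp add: string_colour_def)

lemma string_colour_last: "k \<ge> 1 \<Longrightarrow> string_colour k (6*(k-1) + 5) = 0"
  using string_colour_diamond[of "k-1" k 5] by simp

text \<open>The new edge of colour c at the vertex dv i r under string_colour. Recovering the edge
  from its colour shows that string_colour is proper on the new edges.\<close>

definition string_edge_at :: "nat \<Rightarrow> nat \<Rightarrow> nat \<Rightarrow> nat \<Rightarrow> nat" where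
  "string_edge_at k i r c =
     [[if i = 0 then 6*k else 6*i - 1, 6*i, 6*i + 1],
      [6*i + 2, 6*i, 6*i + 3],
      [6*i + 2, 6*i + 4, 6*i + 1],
      [6*i + 5, 6*i + 4, 6*i + 3]] ! r ! c"

lemma string_edge_at_colour:
  assumes "n \<le> 6*k" "r < 4" "dv i r \<in> str_ends ends u v k (Inr n)"
  shows "string_edge_at k i r (string_colour k n) = n"
  using assms(1)
proof (cases rule: new_edge_cases)
  case attach
  then show ?thesis using assms(2,3)
    by (auto simp: str_ends_attach dv_eq_iff string_edge_at_def string_colour_def)
next
  case (diamond i' j)
  have "j \<in> {0,1,2,3,4,5}" using \<open>j < 6\<close> by auto
  then show ?thesis
    using assms(2,3) diamond str_ends_diamond[OF diamond(1,2), of ends u v]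
      string_colour_diamond[OF diamond(1,2)]
    by (auto simp: dv_eq_iff string_edge_at_def split: if_splits)
qed

lemma string_colour_proper:
  assumes "u \<noteq> v" "n \<le> 6*k" "m \<le> 6*k" "n \<noteq> m"
    and "w \<in> str_ends ends u v k (Inr n)" "w \<in> str_ends ends u v k (Inr m)"
  shows "string_colour k n \<noteq> string_colour k m"
proof (cases w)
  case (Inl w')
  have "(n = 6*k \<and> w' = u) \<or> (n = 6*(k-1) + 5 \<and> w' = v)"
    "(m = 6*k \<and> w' = u) \<or> (m = 6*(k-1) + 5 \<and> w' = v)"
    using old_vertex_on_new_edge[of n k w' ends u v] old_vertex_on_new_edge[of m k w' ends u v]
      assms(2,3,5,6) unfolding Inl by simp_all
  then show ?thesis using assms(1,4) by auto
next
  case (Inr x)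
  then have "w = dv (x div 4) (x mod 4)" by (simp add: dv_def)
  then have "string_edge_at k (x div 4) (x mod 4) (string_colour k n) = n"
    "string_edge_at k (x div 4) (x mod 4) (string_colour k m) = m"
    using assms by (metis string_edge_at_colour mod_less_divisor zero_less_numeral)+
  then show ?thesis using assms(4) by metis
qed

lemma str_ends_entry:
  assumes "i < k"
  shows "dv i 0 \<in> str_ends ends u v k (Inr (if i = 0 then 6*k else 6*i - 1))"
proof (cases "i = 0")
  case False
  then have "6*i - 1 = 6*(i-1) + 5" "i - 1 < k" "i - 1 + 1 = i" using assms by auto
  then show ?thesis using str_ends_diamond[of "i-1" k 5 ends u v] assms False by simp
qed (simp add: str_ends_attach)

lemma diamond_passes_colour:
  assumes col: "is_3_edge_colouring (str_ends ends u v k) F col"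
    and new: "Inr ` {..6*k} \<subseteq> F" and "i < k"
  shows "col (Inr (6*i + 5)) = col (Inr (if i = 0 then 6*k else 6*i - 1))"
proof -
  let ?SE = "str_ends ends u v k" and ?c = "\<lambda>j. col (Inr (6*i + j))"
  define entry where "entry = (if i = 0 then 6*k else 6*i - 1)"
  define D where "D = [{dv i 0, dv i 1}, {dv i 0, dv i 2}, {dv i 1, dv i 2}, {dv i 1, dv i 3},
     {dv i 2, dv i 3}, if i + 1 < k then {dv i 3, dv (i+1) 0} else {dv i 3, Inl v}]"
  have share: "col (Inr n) \<noteq> col (Inr m)"
    if "n \<le> 6*k" "m \<le> 6*k" "n \<noteq> m" "w \<in> ?SE (Inr n)" "w \<in> ?SE (Inr m)" for n m w
    using is_3_edge_colouring_adjacent[OF col] new that by blast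
  have lt3: "n \<le> 6*k \<Longrightarrow> col (Inr n) < 3" for n
    using is_3_edge_colouring_lt3[OF col] new by blast
  have le: "j < 6 \<Longrightarrow> 6*i + j \<le> 6*k" for j using \<open>i < k\<close> by simp
  have inside: "?c j \<noteq> ?c j'" if "j < 6" "j' < 6" "j \<noteq> j'" "w \<in> D ! j" "w \<in> D ! j'" for j j' w
    using share[OF le le, of j j' w] that
      str_ends_diamond[OF \<open>i < k\<close> that(1), of ends u v] str_ends_diamond[OF \<open>i < k\<close> that(2), of ends u v]
    unfolding D_def by simp
  have entry: "entry \<le> 6*k" "\<And>j. j < 6 \<Longrightarrow> entry \<noteq> 6*i + j" "dv i 0 \<in> ?SE (Inr entry)"
    using \<open>i < k\<close> str_ends_entry[OF \<open>i < k\<close>] by (auto simp: entry_def)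
  have entering: "col (Inr entry) \<noteq> ?c j" if "j < 6" "dv i 0 \<in> D ! j" for j
    using share[OF entry(1) le, of j "dv i 0"] entry(2,3) that
      str_ends_diamond[OF \<open>i < k\<close> that(1), of ends u v]
    unfolding D_def by simp
  have c_lt3: "j < 6 \<Longrightarrow> ?c j < 3" for j
    using lt3[OF le] .
  have "col (Inr entry) = ?c 2"
  proof (rule lt3_eq_if_avoid_two[of _ _ "?c 0" "?c 1"])
    show "col (Inr entry) < 3" using lt3 entry(1) .
    show "?c 0 \<noteq> ?c 1" by (rule inside[where w = "dv i 0"]) (simp_all add: D_def)
    show "col (Inr entry) \<noteq> ?c 0" by (rule entering) (simp_all add: D_def)
    show "col (Inr entry) \<noteq> ?c 1" by (rule entering) (simp_all add: D_def)
    show "?c 2 \<noteq> ?c 0" by (rule inside[where w = "dv i 1"]) (simp_all add: D_def)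
    show "?c 2 \<noteq> ?c 1" by (rule inside[where w = "dv i 2"]) (simp_all add: D_def)
  qed (simp_all only: c_lt3)
  moreover have "?c 5 = ?c 2"
  proof (rule lt3_eq_if_avoid_two[of _ _ "?c 3" "?c 4"])
    show "?c 3 \<noteq> ?c 4" by (rule inside[where w = "dv i 3"]) (simp_all add: D_def)
    show "?c 5 \<noteq> ?c 3" by (rule inside[where w = "dv i 3"]) (simp_all add: D_def)
    show "?c 5 \<noteq> ?c 4" by (rule inside[where w = "dv i 3"]) (simp_all add: D_def)
    show "?c 2 \<noteq> ?c 3" by (rule inside[where w = "dv i 1"]) (simp_all add: D_def)
    show "?c 2 \<noteq> ?c 4" by (rule inside[where w = "dv i 2"]) (simp_all add: D_def)
  qed (simp_all only: c_lt3)
  ultimately show ?thesis unfolding entry_def by simp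
qed

lemma string_end_colours_eq:
  assumes col: "is_3_edge_colouring (str_ends ends u v k) F col"
    and new: "Inr ` {..6*k} \<subseteq> F" and "k \<ge> 1"
  shows "col (Inr (6*(k-1) + 5)) = col (Inr (6*k))"
proof -
  have "i < k \<Longrightarrow> col (Inr (6*i + 5)) = col (Inr (6*k))" for i
  proof (induction i)
    case 0
    then show ?case using diamond_passes_colour[OF col new, of 0] by simp
  next
    case (Suc i)
    then show ?case using diamond_passes_colour[OF col new, of "Suc i"] by (simp add: algebra_simps)
  qed
  then show ?thesis using \<open>k \<ge> 1\<close> by simp
qed

lemma colorable3_extend_by_string:
  assumes "u \<noteq> v" "k \<ge> 1" and col: "is_3_edge_colouring ends F col"
    and "c < 3" "N \<subseteq> {..6*k}"
    and at_u: "\<And>e. e \<in> F \<Longrightarrow> u \<in> ends e \<Longrightarrow> 6*k \<in> N \<Longrightarrow> col e \<noteq> c"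
    and at_v: "\<And>e. e \<in> F \<Longrightarrow> v \<in> ends e \<Longrightarrow> 6*(k-1) + 5 \<in> N \<Longrightarrow> col e \<noteq> c"
  shows "colorable3 (str_ends ends u v k) (Inl ` F \<union> Inr ` N)"
proof -
  let ?SE = "str_ends ends u v k"
  define col' where "col' = case_sum col (\<lambda>n. (c + string_colour k n) mod 3)"
  have old_new: "col e \<noteq> col' (Inr n)"
    if e: "e \<in> F" and n: "n \<in> N" and w: "w \<in> ?SE (Inl e)" "w \<in> ?SE (Inr n)" for e n w
  proof -
    obtain w' where "w = Inl w'" "w' \<in> ends e" using w(1) by auto
    moreover have "n \<le> 6*k" using n \<open>N \<subseteq> {..6*k}\<close> by auto
    ultimately have "(n = 6*k \<and> w' = u) \<or> (n = 6*(k-1) + 5 \<and> w' = v)"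
      using old_vertex_on_new_edge[of n k w' ends u v] w(2) by simp
    then have "col e \<noteq> c" "string_colour k n = 0"
      using at_u at_v e n \<open>w' \<in> ends e\<close> string_colour_attach string_colour_last[OF \<open>k \<ge> 1\<close>]
      by auto
    then show ?thesis using \<open>c < 3\<close> by (simp add: col'_def)
  qed
  have new_new: "col' (Inr n) \<noteq> col' (Inr m)"
    if "n \<in> N" "m \<in> N" "n \<noteq> m" "w \<in> ?SE (Inr n)" "w \<in> ?SE (Inr m)" for n m w
  proof -
    have "n \<le> 6*k" "m \<le> 6*k" using that(1,2) \<open>N \<subseteq> {..6*k}\<close> by auto
    then have "string_colour k n \<noteq> string_colour k m"
      using string_colour_proper[OF \<open>u \<noteq> v\<close>] that(3-5) by blast
    then show ?thesis
      using mod3_add_left_inj[of "string_colour k n" "string_colour k m" c] string_colour_lt3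
      by (auto simp: col'_def)
  qed
  have "is_3_edge_colouring ?SE (Inl ` F \<union> Inr ` N) col'"
    unfolding is_3_edge_colouring_def
  proof (intro conjI ballI impI)
    fix x assume "x \<in> Inl ` F \<union> Inr ` N"
    then show "col' x < 3" using is_3_edge_colouring_lt3[OF col] by (auto simp: col'_def)
  next
    fix x y assume x: "x \<in> Inl ` F \<union> Inr ` N" and y: "y \<in> Inl ` F \<union> Inr ` N"
      and "x \<noteq> y \<and> ?SE x \<inter> ?SE y \<noteq> {}"
    then obtain w where xy: "x \<noteq> y" "w \<in> ?SE x" "w \<in> ?SE y" by blast
    show "col' x \<noteq> col' y"
    proof (cases x; cases y)
      fix e f assume "x = Inl e" "y = Inl f"
      then show ?thesis using x y xy is_3_edge_colouring_adjacent[OF col, of e f] by (auto simp: col'_def)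
    next
      fix e n assume "x = Inl e" "y = Inr n"
      then show ?thesis using x y xy old_new[of e n w] by (auto simp: col'_def)
    next
      fix n e assume "x = Inr n" "y = Inl e"
      then show ?thesis using x y xy old_new[of e n w] by (auto simp: col'_def)
    next
      fix n m assume "x = Inr n" "y = Inr m"
      then show ?thesis using x y xy new_new[of n m w] by auto
    qed
  qed
  then show ?thesis unfolding colorable3_iff by blast
qed

lemma is_3_edge_colouring_old_edges:
  assumes "is_3_edge_colouring (str_ends ends u v k) F col"
  shows "is_3_edge_colouring ends (Inl -` F) (col \<circ> Inl)"
  unfolding is_3_edge_colouring_def
  using is_3_edge_colouring_lt3[OF assms] is_3_edge_colouring_adjacent[OF assms, of "Inl e" "Inl f" "Inl w" for e f w]
  by fastforce

lemma colorable3_contract_string: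
  assumes col: "is_3_edge_colouring (str_ends ends u v k) F col"
    and new: "Inr ` {..6*k} \<subseteq> F" and "k \<ge> 1" and a: "ends a = {u, v}"
  shows "colorable3 ends (insert a (Inl -` F))"
proof -
  let ?SE = "str_ends ends u v k" and ?last = "6*(k-1) + 5"
  define col' where "col' = (col \<circ> Inl)(a := col (Inr (6*k)))"
  have last: "?last \<le> 6*k" "Inl v \<in> ?SE (Inr ?last)"
    using \<open>k \<ge> 1\<close> str_ends_diamond[of "k-1" k 5 ends u v] by auto
  have meets_a: "col (Inl f) \<noteq> col (Inr (6*k))" if "Inl f \<in> F" "f \<noteq> a" "ends a \<inter> ends f \<noteq> {}" for f
  proof -
    have "u \<in> ends f \<or> v \<in> ends f" using that(3) a by auto
    then show ?thesis
    proof
      assume "u \<in> ends f"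
      then show ?thesis using is_3_edge_colouring_adjacent[OF col that(1), of "Inr (6*k)" "Inl u"] new
        by (auto simp: str_ends_attach)
    next
      assume "v \<in> ends f"
      then have "col (Inl f) \<noteq> col (Inr ?last)"
        using is_3_edge_colouring_adjacent[OF col that(1), of "Inr ?last" "Inl v"] new last by auto
      then show ?thesis using string_end_colours_eq[OF col new \<open>k \<ge> 1\<close>] by simp
    qed
  qed
  have "is_3_edge_colouring ends (insert a (Inl -` F)) col'"
    unfolding is_3_edge_colouring_def
  proof (intro conjI ballI impI)
    fix e assume "e \<in> insert a (Inl -` F)"
    then show "col' e < 3" using is_3_edge_colouring_lt3[OF col] new by (auto simp: col'_def)
  next
    fix e f assume "e \<in> insert a (Inl -` F)" "f \<in> insert a (Inl -` F)"
      and ef: "e \<noteq> f \<and> ends e \<inter> ends f \<noteq> {}"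
    then consider "e = a" "f \<noteq> a" "Inl f \<in> F" | "f = a" "e \<noteq> a" "Inl e \<in> F"
      | "e \<noteq> a" "f \<noteq> a" "Inl e \<in> F" "Inl f \<in> F"
      by auto
    then show "col' e \<noteq> col' f"
    proof cases
      case 1
      then show ?thesis using meets_a[of f] ef by (auto simp: col'_def)
    next
      case 2
      then show ?thesis using meets_a[of e] ef by (auto simp: col'_def)
    next
      case 3
      then show ?thesis using is_3_edge_colouring_adjacent[OF col 3(3,4), of "Inl w" for w] ef
        by (auto simp: col'_def)
    qed
  qed
  then show ?thesis unfolding colorable3_iff by blast
qed

lemma nu3_string_ge:
  assumes "finite E" "a \<in> E" "ends a = {u, v}" "u \<noteq> v" "k \<ge> 1" "degree E ends v \<le> 3"
  shows "nu3 V E ends + 6*k \<le> nu3 V' (str_E E a k) (str_ends ends u v k)"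
proof -
  let ?E' = "str_E E a k" and ?SE = "str_ends ends u v k"
  obtain F where F: "F \<subseteq> E" "colorable3 ends F" "card F = nu3 V E ends"
    using nu3_attained[OF \<open>finite E\<close>] by blast
  then obtain col where col: "is_3_edge_colouring ends F col" unfolding colorable3_iff by blast
  have "finite F" using F(1) \<open>finite E\<close> finite_subset by blast
  have "\<exists>F'. F' \<subseteq> ?E' \<and> colorable3 ?SE F' \<and> card F' = card F + 6*k"
  proof (cases "a \<in> F")
    case True
    let ?F' = "Inl ` (F - {a}) \<union> Inr ` {..6*k}"
    have meets_a: "col e \<noteq> col a" if "e \<in> F - {a}" "w \<in> ends e" "w \<in> {u, v}" for e w
      by (rule is_3_edge_colouring_adjacent[OF col _ True, of e w]) (use that \<open>ends a = {u, v}\<close> in auto)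
    have "colorable3 ?SE ?F'"
      by (rule colorable3_extend_by_string[OF \<open>u \<noteq> v\<close> \<open>k \<ge> 1\<close> is_3_edge_colouring_subset[OF col]])
        (use is_3_edge_colouring_lt3[OF col True] meets_a[of _ u] meets_a[of _ v] in auto)
    moreover have "card ?F' = card F + 6*k"
      using \<open>finite F\<close> True card_gt_0_iff[of F] by (auto simp: card_Inl_Inr)
    moreover have "?F' \<subseteq> ?E'" using F(1) by (auto simp: str_E_def)
    ultimately show ?thesis by blast
  next
    case False
    let ?F' = "Inl ` F \<union> Inr ` {..<6*k}" and ?at_v = "{e \<in> F. v \<in> ends e}"
    have "?at_v \<subseteq> {e \<in> E. v \<in> ends e} - {a}" using F(1) False by auto
    moreover have "card ({e \<in> E. v \<in> ends e} - {a}) \<le> 2"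
      using \<open>degree E ends v \<le> 3\<close> \<open>a \<in> E\<close> \<open>ends a = {u, v}\<close> \<open>finite E\<close>
      by (simp add: degree_def)
    ultimately have "card ?at_v \<le> 2"
      using card_mono[of "{e \<in> E. v \<in> ends e} - {a}" ?at_v] \<open>finite E\<close> by simp
    moreover have "finite ?at_v" using \<open>finite F\<close> by simp
    ultimately obtain d where d: "d < 3" "d \<notin> col ` ?at_v"
      using colour_not_in_image by blast
    have "colorable3 ?SE ?F'"
      by (rule colorable3_extend_by_string[OF \<open>u \<noteq> v\<close> \<open>k \<ge> 1\<close> col d(1)]) (use d(2) in auto)
    moreover have "card ?F' = card F + 6*k" using \<open>finite F\<close> by (simp add: card_Inl_Inr)
    moreover have "?F' \<subseteq> ?E'" using F(1) False by (auto simp: str_E_def)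
    ultimately show ?thesis by blast
  qed
  then obtain F' where F': "F' \<subseteq> ?E'" "colorable3 ?SE F'" "card F' = card F + 6*k" by blast
  have "finite ?E'" using \<open>finite E\<close> by (simp add: str_E_def)
  then show ?thesis using card_le_nu3[OF _ F'(1,2), of V'] F'(3) F(3) by simp
qed

lemma nu3_string_le:
  assumes "finite E" "a \<in> E" "ends a = {u, v}" "k \<ge> 1"
  shows "nu3 V' (str_E E a k) (str_ends ends u v k) \<le> nu3 V E ends + 6*k"
proof (rule nu3_le)
  let ?SE = "str_ends ends u v k"
  show "finite (str_E E a k)" using \<open>finite E\<close> by (simp add: str_E_def)
  fix F assume F: "F \<subseteq> str_E E a k" "colorable3 ?SE F"
  then obtain col where col: "is_3_edge_colouring ?SE F col" unfolding colorable3_iff by blast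
  define old where "old = Inl -` F"
  define new where "new = Inr -` F"
  have old_sub: "old \<subseteq> E - {a}" and new_sub: "new \<subseteq> {..6*k}"
    using F(1) by (auto simp: str_E_def old_def new_def)
  have "finite old" using old_sub \<open>finite E\<close> finite_subset by blast
  have "F = Inl ` old \<union> Inr ` new"
  proof (rule set_eqI)
    show "x \<in> F \<longleftrightarrow> x \<in> Inl ` old \<union> Inr ` new" for x by (cases x) (auto simp: old_def new_def)
  qed
  then have card_F: "card F = card old + card new"
    using card_Inl_Inr[OF \<open>finite old\<close> finite_subset[OF new_sub finite_atMost]] by simp
  show "card F \<le> nu3 V E ends + 6*k"
  proof (cases "new = {..6*k}")
    case True
    then have "colorable3 ends (insert a old)"
      using colorable3_contract_string[OF col _ \<open>k \<ge> 1\<close> \<open>ends a = {u, v}\<close>]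
      unfolding old_def new_def by auto
    moreover have "insert a old \<subseteq> E" using old_sub \<open>a \<in> E\<close> by auto
    ultimately have "card (insert a old) \<le> nu3 V E ends"
      using card_le_nu3[OF \<open>finite E\<close>] by blast
    moreover have "a \<notin> old" using old_sub by blast
    ultimately show ?thesis using card_F True \<open>finite old\<close> by simp
  next
    case False
    then have "card new < card {..6*k}"
      using new_sub psubset_card_mono[of "{..6*k}" new] by auto
    moreover have "card old \<le> nu3 V E ends"
      using card_le_nu3[OF \<open>finite E\<close>, of old] old_sub is_3_edge_colouring_old_edges[OF col]
      unfolding colorable3_iff old_def by auto
    ultimately show ?thesis using card_F by simp
  qed
qed

theorem lemma2:
  fixes V :: "'v set" and E :: "'e set" and ends :: "'e \<Rightarrow> 'v set"
    and a :: 'e and u v :: 'v and k :: nat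
  assumes "cubic V E ends"
    and "a \<in> E" and "ends a = {u, v}"
    and "k \<ge> 1"
    and "cubic (str_V V k) (str_E E a k) (str_ends ends u v k)"
  shows "r3 (str_V V k) (str_E E a k) (str_ends ends u v k) = r3 V E ends"
proof -
  have G: "finite E" "card (ends a) = 2" "ends a \<subseteq> V" "\<forall>x\<in>V. degree E ends x = 3"
    using assms(1,2) by (auto simp: cubic_def multigraph_def)
  then have "u \<noteq> v" "degree E ends v \<le> 3" using assms(3) by auto
  then have "nu3 (str_V V k) (str_E E a k) (str_ends ends u v k) = nu3 V E ends + 6*k"
    by (intro antisym nu3_string_le nu3_string_ge G(1) assms(2-4))
  then show ?thesis using card_str_E[OF G(1) assms(2)] by (simp add: r3_def)
qed

end
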